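(* Let $L\subseteq\Sigma^*$ be accepted by an end-decisive MM-QFA with bounded positive one-sided error and positive amplitude. Then there exists an end-decisive MM-QFA that accepts $\Sigma^*\setminus L$ with bounded error.
   Context: A measure-many quantum finite automaton (MM-QFA) over $\Sigma$ is a tuple $(Q,\Sigma,\{U_\sigma\}_{\sigma\in\Sigma\cup\{\$\}},q_0,Q_{acc},Q_{rej})$ with $Q$ finite indexing an orthonormal basis of $\mathbb{C}^Q$, end-marker $\$\notin\Sigma$, unitary $U_\sigma$, initial state $q_0$, and $Q$ partitioned into $Q_{acc},Q_{rej},Q_{non}$ with orthogonal projections $P_{acc},P_{rej},P_{non}$. On input $x$ it processes $x\$$ maintaining $(\psi,p_{acc},p_{rej})$, initially $(|q_0\rangle,0,0)$; on reading $\sigma$: $\psi'=U_\sigma\psi$, $p_{acc}\mathrel{+}=\|P_{acc}\psi'\|^2$, $p_{rej}\mathrel{+}=\|P_{rej}\psi'\|^2$, $\psi\leftarrow P_{non}\psi'$; the acceptance probability $p(x)$ is the final $p_{acc}$. It is end-decisive if $P_{acc}\psi'=0$ after reading every non-end-marker symbol, on every input. It accepts with positive amplitude if, on every input and at every step, the coordinates of $\psi'$ on the accepting basis states are non-negative reals. It accepts $L$ with bounded positive one-sided error if there is $c>0$ with $p(x)>c$ for $x\in L$ and $p(x)=0$ for $x\notin L$; it accepts a language $K$ with bounded error if for some $\lambda$ and $\epsilon>0$, $p(x)>\lambda+\epsilon$ for $x\in K$ and $p(x)<\lambda-\epsilon$ for $x\notin K$. *)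

theory Defs
  imports Complex_Main
begin

text \<open>States are the naturals 0..<nst (indexing the orthonormal
basis of C^Q). The input alphabet is the type 'a; the extended alphabet
Sigma + {end-marker} is 'a option, with None the end-marker.
Transition matrices: trans M s i j = <i| U_s |j>.\<close>

record 'a mmqfa =
  nst   :: nat
  trans :: "'a option \<Rightarrow> nat \<Rightarrow> nat \<Rightarrow> complex"
  init  :: nat
  acc   :: "nat set"
  rej   :: "nat set"

definition unitary_on :: "nat \<Rightarrow> (nat \<Rightarrow> nat \<Rightarrow> complex) \<Rightarrow> bool" where
  "unitary_on n U \<longleftrightarrow>
     (\<forall>i<n. \<forall>j<n. (\<Sum>k<n. cnj (U k i) * U k j) = (if i = j then 1 else 0))"

definition wf_mmqfa :: "'a mmqfa \<Rightarrow> bool" where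
  "wf_mmqfa M \<longleftrightarrow> init M < nst M \<and> acc M \<subseteq> {..<nst M} \<and> rej M \<subseteq> {..<nst M}
     \<and> acc M \<inter> rej M = {} \<and> (\<forall>s. unitary_on (nst M) (trans M s))"

definition non :: "'a mmqfa \<Rightarrow> nat set" where
  "non M = {..<nst M} - acc M - rej M"

definition apply_U :: "'a mmqfa \<Rightarrow> 'a option \<Rightarrow> (nat \<Rightarrow> complex) \<Rightarrow> (nat \<Rightarrow> complex)" where
  "apply_U M s \<psi> = (\<lambda>i. if i < nst M then (\<Sum>j<nst M. trans M s i j * \<psi> j) else 0)"

definition step :: "'a mmqfa \<Rightarrow> 'a option \<Rightarrow> (nat \<Rightarrow> complex) \<times> real \<times> real
                     \<Rightarrow> (nat \<Rightarrow> complex) \<times> real \<times> real" where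
  "step M s c = (case c of (\<psi>, pa, pr) \<Rightarrow>
      (let \<psi>' = apply_U M s \<psi> in
        ((\<lambda>i. if i \<in> non M then \<psi>' i else 0),
         pa + (\<Sum>i\<in>acc M. (cmod (\<psi>' i))\<^sup>2),
         pr + (\<Sum>i\<in>rej M. (cmod (\<psi>' i))\<^sup>2))))"

definition init_conf :: "'a mmqfa \<Rightarrow> (nat \<Rightarrow> complex) \<times> real \<times> real" where
  "init_conf M = ((\<lambda>i. if i = init M then 1 else 0), 0, 0)"

definition run :: "'a mmqfa \<Rightarrow> 'a option list \<Rightarrow> (nat \<Rightarrow> complex) \<times> real \<times> real" where
  "run M ws = fold (step M) ws (init_conf M)"

definition acc_prob :: "'a mmqfa \<Rightarrow> 'a list \<Rightarrow> real" where
  "acc_prob M x = fst (snd (run M (map Some x @ [None])))"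

definition state_after :: "'a mmqfa \<Rightarrow> 'a list \<Rightarrow> (nat \<Rightarrow> complex)" where
  "state_after M w = fst (run M (map Some w))"

definition end_decisive :: "'a mmqfa \<Rightarrow> bool" where
  "end_decisive M \<longleftrightarrow>
     (\<forall>w \<sigma>. \<forall>i\<in>acc M. apply_U M (Some \<sigma>) (state_after M w) i = 0)"

definition positive_amplitude :: "'a mmqfa \<Rightarrow> bool" where
  "positive_amplitude M \<longleftrightarrow>
     (\<forall>w s. \<forall>i\<in>acc M. Im (apply_U M s (state_after M w) i) = 0
                      \<and> Re (apply_U M s (state_after M w) i) \<ge> 0)"

definition accepts_pos_one_sided :: "'a mmqfa \<Rightarrow> 'a list set \<Rightarrow> bool" where
  "accepts_pos_one_sided M L \<longleftrightarrow>
     (\<exists>c>0. \<forall>x. (x \<in> L \<longrightarrow> acc_prob M x > c) \<and> (x \<notin> L \<longrightarrow> acc_prob M x = 0))"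

definition accepts_bounded :: "'a mmqfa \<Rightarrow> 'a list set \<Rightarrow> bool" where
  "accepts_bounded M K \<longleftrightarrow>
     (\<exists>t \<epsilon>. \<epsilon> > 0 \<and> (\<forall>x. (x \<in> K \<longrightarrow> acc_prob M x > t + \<epsilon>) \<and> (x \<notin> K \<longrightarrow> acc_prob M x < t - \<epsilon>)))"

end

theory Submission
  imports Defs
begin

text \<open>
  Since M is end-decisive it accepts only on the end-marker, so p(x) is the sum of the
  squares of the amplitudes a_j \<ge> 0 on its k accepting states after the end-marker. Hence
  s(x) = (\<Sum>j. a_j) / sqrt k vanishes for x \<notin> L and is bounded below by a positive
  constant for x \<in> L. The new automaton runs M at amplitude 7/25 in superposition with a
  constant amplitude 24/25 on an extra idle state. This superposition is created and
  maintained by conjugating every transition with a Householder reflection; the reflection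
  involves only non-halting states, so it commutes with the measurements. At the end-marker a
  second reflection makes the idle amplitude interfere with the uniform superposition of the
  accepting states of M, and the new acceptance probability becomes
  (2/3 (16/25 - 14/75 s(x)))^2: a constant on the complement of L, and smaller by a fixed
  margin on L.
\<close>

section \<open>Matrices and vectors over the first N coordinates\<close>

type_synonym cvec = "nat \<Rightarrow> complex"
type_synonym cmat = "nat \<Rightarrow> nat \<Rightarrow> complex"

definition basis_vec :: "nat \<Rightarrow> cvec" where
  "basis_vec k = (\<lambda>i. if i = k then 1 else 0)"

definition mat_apply :: "nat \<Rightarrow> cmat \<Rightarrow> cvec \<Rightarrow> cvec" where
  "mat_apply N A x = (\<lambda>i. if i < N then (\<Sum>j<N. A i j * x j) else 0)"

definition mat_mul :: "nat \<Rightarrow> cmat \<Rightarrow> cmat \<Rightarrow> cmat" where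
  "mat_mul N A B = (\<lambda>i j. \<Sum>k<N. A i k * B k j)"

definition cinner :: "nat \<Rightarrow> cvec \<Rightarrow> cvec \<Rightarrow> complex" where
  "cinner N x y = (\<Sum>j<N. cnj (x j) * y j)"

definition householder :: "cvec \<Rightarrow> cmat" where
  "householder v = (\<lambda>i j. (if i = j then 1 else 0) - 2 * v i * cnj (v j))"

definition mat_extend :: "nat \<Rightarrow> cmat \<Rightarrow> cmat" where
  "mat_extend n U = (\<lambda>i j. if i < n \<and> j < n then U i j else if i = j then 1 else 0)"

lemma mat_apply_mat_mul: "mat_apply N (mat_mul N A B) x = mat_apply N A (mat_apply N B x)"
proof
  fix i
  show "mat_apply N (mat_mul N A B) x i = mat_apply N A (mat_apply N B x) i"
  proof (cases "i < N")
    case True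
    have "(\<Sum>j<N. (\<Sum>k<N. A i k * B k j) * x j) = (\<Sum>j<N. \<Sum>k<N. A i k * (B k j * x j))"
      by (simp add: sum_distrib_right mult.assoc)
    also have "\<dots> = (\<Sum>k<N. A i k * (\<Sum>j<N. B k j * x j))"
      by (subst sum.swap) (simp add: sum_distrib_left)
    finally show ?thesis using True by (simp add: mat_apply_def mat_mul_def)
  qed (simp add: mat_apply_def)
qed

lemma mat_apply_scale: "mat_apply N A (\<lambda>j. c * x j) = (\<lambda>i. c * mat_apply N A x i)"
  by (simp add: mat_apply_def fun_eq_iff sum_distrib_left mult_ac)

lemma cinner_self: "cinner N x x = of_real (\<Sum>j<N. (cmod (x j))\<^sup>2)"
  unfolding cinner_def of_real_sum
  by (simp add: complex_norm_square mult.commute del: of_real_power)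

lemma cinner_mat_apply:
  assumes "unitary_on N A"
  shows "cinner N (mat_apply N A x) (mat_apply N A y) = cinner N x y"
proof -
  have "cinner N (mat_apply N A x) (mat_apply N A y)
      = (\<Sum>i<N. \<Sum>j<N. \<Sum>l<N. cnj (x j) * y l * (cnj (A i j) * A i l))"
    by (simp add: cinner_def mat_apply_def sum_distrib_left sum_distrib_right algebra_simps)
  also have "\<dots> = (\<Sum>j<N. \<Sum>l<N. \<Sum>i<N. cnj (x j) * y l * (cnj (A i j) * A i l))"
    by (subst sum.swap) (rule sum.cong[OF refl], rule sum.swap)
  also have "\<dots> = (\<Sum>j<N. \<Sum>l<N. cnj (x j) * y l * (\<Sum>i<N. cnj (A i j) * A i l))"
    by (simp add: sum_distrib_left)
  also have "\<dots> = (\<Sum>j<N. \<Sum>l<N. cnj (x j) * y l * (if j = l then 1 else 0))"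
    using assms by (simp add: unitary_on_def)
  also have "\<dots> = cinner N x y"
    by (simp add: cinner_def if_distrib cong: if_cong)
  finally show ?thesis .
qed

lemma sum_cmod_sq_mat_apply:
  assumes "unitary_on N A"
  shows "(\<Sum>i<N. (cmod (mat_apply N A x i))\<^sup>2) = (\<Sum>j<N. (cmod (x j))\<^sup>2)"
  using cinner_mat_apply[OF assms, of x x] unfolding cinner_self of_real_eq_iff .

lemma unitary_on_mat_mul:
  assumes "unitary_on N A" and "unitary_on N B"
  shows "unitary_on N (mat_mul N A B)"
proof -
  have "cinner N (\<lambda>k. mat_mul N A B k i) (\<lambda>k. mat_mul N A B k j)
      = cinner N (mat_apply N A (\<lambda>k. B k i)) (mat_apply N A (\<lambda>k. B k j))" for i j
    by (simp add: cinner_def mat_mul_def mat_apply_def)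
  then show ?thesis
    using assms(2) cinner_mat_apply[OF assms(1)] by (simp add: unitary_on_def cinner_def)
qed

lemma unitary_on_permute_columns:
  assumes "unitary_on N A" and "\<And>i. i < N \<Longrightarrow> p i < N" and "inj_on p {..<N}"
  shows "unitary_on N (\<lambda>i j. A i (p j))"
  using assms unfolding unitary_on_def inj_on_def by auto

lemma mat_apply_permute_columns:
  assumes "\<And>j. j < N \<Longrightarrow> p j < N" and "\<And>j. p (p j) = j"
  shows "mat_apply N (\<lambda>i j. A i (p j)) x = mat_apply N A (\<lambda>j. x (p j))"
proof -
  have reindex: "(\<Sum>j<N. A i (p j) * x j) = (\<Sum>j<N. A i j * x (p j))" for i
    by (rule sum.reindex_bij_witness[of _ p p]) (use assms in auto)
  show ?thesis unfolding mat_apply_def reindex ..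
qed

lemma sum_basis_vec: "(\<Sum>j<N. c * basis_vec k j) = (if k < N then c else 0)"
  by (simp add: basis_vec_def if_distrib cong: if_cong)

lemma cinner_basis_vec: "k < N \<Longrightarrow> cinner N x (basis_vec k) = cnj (x k)"
  by (simp add: cinner_def basis_vec_def if_distrib cong: if_cong)

lemma cinner_basis_vec_left:
  assumes "k < N"
  shows "cinner N (basis_vec k) x = x k"
proof -
  have "cinner N (basis_vec k) x = (\<Sum>j<N. if j = k then x j else 0)"
    unfolding cinner_def basis_vec_def by (intro sum.cong) auto
  then show ?thesis using assms by simp
qed

lemma mat_apply_householder:
  "mat_apply N (householder v) x i = (if i < N then x i - 2 * v i * cinner N v x else 0)"
proof (cases "i < N")
  case True
  have "(\<Sum>j<N. householder v i j * x j)
      = (\<Sum>j<N. (if i = j then x j else 0) - 2 * v i * (cnj (v j) * x j))"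
    by (rule sum.cong) (auto simp: householder_def algebra_simps)
  also have "\<dots> = x i - 2 * v i * cinner N v x"
    using True by (simp add: sum_subtractf cinner_def sum_distrib_left)
  finally show ?thesis using True by (simp add: mat_apply_def)
qed (simp add: mat_apply_def)

lemma householder_involutive:
  assumes "cinner N v v = 1" and "\<And>i. N \<le> i \<Longrightarrow> x i = 0"
  shows "mat_apply N (householder v) (mat_apply N (householder v) x) = x"
proof
  fix i
  have "cinner N v (mat_apply N (householder v) x)
      = cinner N v x - 2 * cinner N v v * cinner N v x"
    by (simp add: cinner_def mat_apply_householder algebra_simps sum_subtractf
        sum_distrib_left sum_distrib_right)
  then show "mat_apply N (householder v) (mat_apply N (householder v) x) i = x i"
    using assms by (cases "i < N") (auto simp: mat_apply_householder)
qed

lemma householder_commutes_with_restriction: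
  assumes "\<And>i. i \<notin> S \<Longrightarrow> v i = 0"
  shows "(\<lambda>i. if i \<in> S then mat_apply N (householder v) x i else 0)
       = mat_apply N (householder v) (\<lambda>i. if i \<in> S then x i else 0)"
proof -
  have "cinner N v (\<lambda>i. if i \<in> S then x i else 0) = cinner N v x"
    unfolding cinner_def using assms by (intro sum.cong) auto
  then show ?thesis
    using assms by (auto simp: fun_eq_iff mat_apply_householder)
qed

lemma unitary_on_householder:
  assumes "cinner N v v = 1"
  shows "unitary_on N (householder v)"
  unfolding unitary_on_def
proof (intro allI impI)
  fix i j assume ij: "i < N" "j < N"
  have col: "(\<Sum>k<N. cnj (v k) * householder v k j) = - cnj (v j)"
  proof -
    have "(\<Sum>k<N. cnj (v k) * householder v k j)
        = (\<Sum>k<N. (if k = j then cnj (v k) else 0) - (cnj (v k) * v k) * (2 * cnj (v j)))"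
      by (rule sum.cong) (auto simp: householder_def algebra_simps)
    also have "\<dots> = cnj (v j) - cinner N v v * (2 * cnj (v j))"
      using ij by (simp add: sum_subtractf sum_distrib_right cinner_def)
    finally show ?thesis using assms by simp
  qed
  have "(\<Sum>k<N. cnj (householder v k i) * householder v k j)
      = (\<Sum>k<N. (if k = i then householder v k j else 0)
               - 2 * v i * (cnj (v k) * householder v k j))"
    by (rule sum.cong) (auto simp: householder_def algebra_simps)
  also have "\<dots> = householder v i j - 2 * v i * (\<Sum>k<N. cnj (v k) * householder v k j)"
    using ij by (simp add: sum_subtractf sum_distrib_left)
  finally show "(\<Sum>k<N. cnj (householder v k i) * householder v k j) = (if i = j then 1 else 0)"
    unfolding col by (simp add: householder_def)
qed

lemma sum_lessThan_split:
  assumes "n \<le> (N::nat)"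
  shows "(\<Sum>j<N. f j) = (\<Sum>j<n. f j) + (\<Sum>j\<in>{n..<N}. f j)"
  using assms by (simp add: lessThan_atLeast0 sum.atLeastLessThan_concat)

lemma unitary_on_mat_extend:
  assumes "unitary_on n U" and "n \<le> N"
  shows "unitary_on N (mat_extend n U)"
  unfolding unitary_on_def
proof (intro allI impI)
  fix i j assume ij: "i < N" "j < N"
  let ?f = "\<lambda>k. cnj (mat_extend n U k i) * mat_extend n U k j"
  show "(\<Sum>k<N. ?f k) = (if i = j then 1 else 0)"
  proof (cases "i < n \<and> j < n")
    case True
    have "(\<Sum>k\<in>{n..<N}. ?f k) = 0"
      using True by (intro sum.neutral) (auto simp: mat_extend_def)
    then show ?thesis
      using True assms unfolding sum_lessThan_split[OF assms(2)] unitary_on_def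
      by (simp add: mat_extend_def)
  next
    case False
    have "(\<Sum>k<n. ?f k) = 0"
      using False by (intro sum.neutral) (auto simp: mat_extend_def)
    moreover have "(\<Sum>k\<in>{n..<N}. ?f k)
        = (\<Sum>k\<in>{n..<N}. if k = i then (if i = j then 1 else 0) else 0)"
      using False by (intro sum.cong) (auto simp: mat_extend_def)
    ultimately show ?thesis
      using False ij unfolding sum_lessThan_split[OF assms(2)] by auto
  qed
qed

lemma mat_apply_mat_extend:
  assumes "n \<le> N" and "\<And>j. n \<le> j \<Longrightarrow> x j = 0"
    and "\<And>j. j < n \<or> N \<le> j \<Longrightarrow> y j = 0"
  shows "mat_apply N (mat_extend n U) (\<lambda>j. x j + y j) = (\<lambda>i. mat_apply n U x i + y i)"
proof
  fix i
  show "mat_apply N (mat_extend n U) (\<lambda>j. x j + y j) i = mat_apply n U x i + y i"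
  proof (cases "i < n")
    case True
    have "(\<Sum>j\<in>{n..<N}. mat_extend n U i j * (x j + y j)) = 0"
      using True by (intro sum.neutral) (auto simp: mat_extend_def)
    moreover have "(\<Sum>j<n. mat_extend n U i j * (x j + y j)) = (\<Sum>j<n. U i j * x j)"
      using True assms(3) by (intro sum.cong) (auto simp: mat_extend_def)
    ultimately show ?thesis
      using True assms(1,3) unfolding mat_apply_def sum_lessThan_split[OF assms(1)] by auto
  next
    case False
    have "(\<Sum>j<N. mat_extend n U i j * (x j + y j))
        = (\<Sum>j<N. if j = i then x j + y j else 0)"
      using False by (intro sum.cong) (auto simp: mat_extend_def)
    moreover have "x i = 0" using False assms(2) by simp
    ultimately show ?thesis
      using False assms(3)[of i] by (simp add: mat_apply_def)
  qed
qed

section \<open>Runs of measure-many automata\<close>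

lemma run_snoc: "run M (ws @ [s]) = step M s (run M ws)"
  by (simp add: run_def)

lemma state_after_Nil: "state_after M [] = basis_vec (init M)"
  by (simp add: state_after_def run_def init_conf_def basis_vec_def)

lemma state_after_snoc:
  "state_after M (w @ [\<sigma>])
   = (\<lambda>i. if i \<in> non M then apply_U M (Some \<sigma>) (state_after M w) i else 0)"
proof -
  obtain \<psi> p q where r: "run M (map Some w) = (\<psi>, p, q)" by (cases "run M (map Some w)")
  then have "state_after M (w @ [\<sigma>]) = fst (step M (Some \<sigma>) (\<psi>, p, q))"
    by (simp add: state_after_def run_snoc)
  moreover have "state_after M w = \<psi>" using r by (simp add: state_after_def)
  ultimately show ?thesis by (simp only:) (simp add: step_def Let_def)
qed

lemma apply_U_eq_mat_apply: "apply_U M s = mat_apply (nst M) (trans M s)"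
  by (simp add: fun_eq_iff apply_U_def mat_apply_def)

lemma non_less: "i \<in> non M \<Longrightarrow> i < nst M"
  by (simp add: non_def)

lemma apply_U_eq_0: "nst M \<le> i \<Longrightarrow> apply_U M s \<psi> i = 0"
  by (simp add: apply_U_def)

lemma state_after_eq_0_notin_non: "w \<noteq> [] \<Longrightarrow> i \<notin> non M \<Longrightarrow> state_after M w i = 0"
  by (induction w rule: rev_induct) (auto simp: state_after_snoc)

lemma state_after_eq_0:
  assumes "wf_mmqfa M" and "nst M \<le> i"
  shows "state_after M w i = 0"
  using assms by (induction w rule: rev_induct)
    (auto simp: wf_mmqfa_def state_after_Nil state_after_snoc basis_vec_def non_def)

lemma sum_cmod_sq_state_after_le_1:
  assumes "wf_mmqfa M"
  shows "(\<Sum>i<nst M. (cmod (state_after M w i))\<^sup>2) \<le> 1"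
proof (induction w rule: rev_induct)
  case Nil
  have "(\<Sum>i<nst M. (cmod (basis_vec (init M) i))\<^sup>2)
      = (\<Sum>i<nst M. if i = init M then 1 else 0)"
    by (intro sum.cong) (auto simp: basis_vec_def)
  then show ?case
    using assms by (simp add: wf_mmqfa_def state_after_Nil)
next
  case (snoc \<sigma> w)
  have "(\<Sum>i<nst M. (cmod (state_after M (w @ [\<sigma>]) i))\<^sup>2)
      \<le> (\<Sum>i<nst M. (cmod (apply_U M (Some \<sigma>) (state_after M w) i))\<^sup>2)"
    by (intro sum_mono) (simp add: state_after_snoc)
  also have "\<dots> = (\<Sum>i<nst M. (cmod (state_after M w i))\<^sup>2)"
    using assms unfolding apply_U_eq_mat_apply wf_mmqfa_def by (simp add: sum_cmod_sq_mat_apply)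
  finally show ?case using snoc by simp
qed

lemma acc_mass_before_end_marker:
  assumes "end_decisive M"
  shows "fst (snd (run M (map Some w))) = 0"
proof (induction w rule: rev_induct)
  case Nil
  then show ?case by (simp add: run_def init_conf_def)
next
  case (snoc \<sigma> w)
  obtain \<psi> p q where r: "run M (map Some w) = (\<psi>, p, q)" by (cases "run M (map Some w)")
  then have "\<forall>i\<in>acc M. apply_U M (Some \<sigma>) \<psi> i = 0"
    using assms unfolding end_decisive_def state_after_def by (metis fst_conv)
  then show ?case using snoc r by (simp add: run_snoc step_def Let_def)
qed

lemma acc_prob_end_decisive:
  assumes "end_decisive M"
  shows "acc_prob M x = (\<Sum>i\<in>acc M. (cmod (apply_U M None (state_after M x) i))\<^sup>2)"
proof -
  obtain \<psi> p q where r: "run M (map Some x) = (\<psi>, p, q)" by (cases "run M (map Some x)")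
  moreover have "p = 0" using acc_mass_before_end_marker[OF assms, of x] r by simp
  ultimately show ?thesis by (simp add: acc_prob_def state_after_def run_snoc step_def Let_def)
qed

lemma acc_prob_le_1:
  assumes "wf_mmqfa M" and "end_decisive M"
  shows "acc_prob M x \<le> 1"
proof -
  have "acc_prob M x \<le> (\<Sum>i<nst M. (cmod (apply_U M None (state_after M x) i))\<^sup>2)"
    using assms unfolding acc_prob_end_decisive[OF assms(2)] wf_mmqfa_def
    by (intro sum_mono2) auto
  also have "\<dots> = (\<Sum>i<nst M. (cmod (state_after M x i))\<^sup>2)"
    using assms(1) unfolding apply_U_eq_mat_apply wf_mmqfa_def by (simp add: sum_cmod_sq_mat_apply)
  also have "\<dots> \<le> 1" by (rule sum_cmod_sq_state_after_le_1[OF assms(1)])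
  finally show ?thesis .
qed

lemma accepts_bounded_if_gap:
  assumes "\<And>x. x \<in> K \<Longrightarrow> acc_prob M x = p" and "\<And>x. x \<notin> K \<Longrightarrow> acc_prob M x \<le> q"
    and "q < p"
  shows "accepts_bounded M K"
  unfolding accepts_bounded_def
proof (intro exI conjI allI impI)
  show "(p - q) / 4 > 0" using assms(3) by simp
  show "acc_prob M x > (p + q) / 2 + (p - q) / 4" if "x \<in> K" for x
    using assms(1)[OF that] assms(3) by (simp add: field_simps)
  show "acc_prob M x < (p + q) / 2 - (p - q) / 4" if "x \<notin> K" for x
    using assms(2)[OF that] assms(3) by (simp add: field_simps)
qed

section \<open>The complement automaton\<close>

text \<open>
  The initial state of M may be halting. It is then replaced by the fresh state nst M, and
  relabel lets nst M play the role of init M in the first transition.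
\<close>

definition start_state :: "'a mmqfa \<Rightarrow> nat" where
  "start_state M = (if init M \<in> non M then init M else nst M)"

definition relabel :: "'a mmqfa \<Rightarrow> nat \<Rightarrow> nat" where
  "relabel M = (if init M \<in> non M then id else id(init M := nst M, nst M := init M))"

definition start_vec :: "'a mmqfa \<Rightarrow> 'a list \<Rightarrow> cvec" where
  "start_vec M w = (if w = [] then basis_vec (start_state M) else state_after M w)"

definition lift_state :: "'a mmqfa \<Rightarrow> cvec \<Rightarrow> cvec" where
  "lift_state M \<psi> = (\<lambda>i. 7/25 * \<psi> i + 24/25 * basis_vec (nst M + 1) i)"

definition prep_vec :: "'a mmqfa \<Rightarrow> cvec" where
  "prep_vec M = (\<lambda>i. 3/5 * basis_vec (start_state M) i - 4/5 * basis_vec (nst M + 1) i)"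

definition acc_uniform :: "'a mmqfa \<Rightarrow> cvec" where
  "acc_uniform M = (if acc M = {} then basis_vec (nst M)
     else (\<lambda>i. if i \<in> acc M then of_real (1 / sqrt (card (acc M))) else 0))"

definition meas_vec :: "'a mmqfa \<Rightarrow> cvec" where
  "meas_vec M = (\<lambda>i. 2/3 * basis_vec (nst M + 1) i - 2/3 * acc_uniform M i
                     + 1/3 * basis_vec (nst M + 2) i)"

definition relabeled_trans :: "'a mmqfa \<Rightarrow> 'a option \<Rightarrow> cmat" where
  "relabeled_trans M s = (\<lambda>i j. mat_extend (nst M) (trans M s) i (relabel M j))"

text \<open>
  States nst M, nst M + 1 and nst M + 2 are the fresh start state, the idle state and the only
  accepting state. Reflecting in prep_vec exchanges the start state with its
  lift_state, so the state after a prefix w is that reflection applied to the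
  lift_state of the state of M after w.
\<close>

definition compl_mmqfa :: "'a mmqfa \<Rightarrow> 'a mmqfa" where
  "compl_mmqfa M = \<lparr>nst = nst M + 3,
     trans = (\<lambda>s. mat_mul (nst M + 3)
                    (householder (if s = None then meas_vec M else prep_vec M))
                    (mat_mul (nst M + 3) (relabeled_trans M s) (householder (prep_vec M)))),
     init = start_state M, acc = {nst M + 2}, rej = acc M \<union> rej M\<rparr>"

lemma compl_mmqfa_simps [simp]:
  "nst (compl_mmqfa M) = nst M + 3"
  "init (compl_mmqfa M) = start_state M"
  "acc (compl_mmqfa M) = {nst M + 2}"
  "rej (compl_mmqfa M) = acc M \<union> rej M"
  "trans (compl_mmqfa M) s = mat_mul (nst M + 3)
     (householder (if s = None then meas_vec M else prep_vec M))
     (mat_mul (nst M + 3) (relabeled_trans M s) (householder (prep_vec M)))"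
  by (simp_all add: compl_mmqfa_def)

lemma lift_state_eq_0:
  assumes "\<And>i. nst M + 1 \<le> i \<Longrightarrow> \<psi> i = 0" and "nst M + 3 \<le> i"
  shows "lift_state M \<psi> i = 0"
  using assms by (simp add: lift_state_def basis_vec_def)

context
  fixes M :: "'a mmqfa"
  assumes wf: "wf_mmqfa M"
begin

lemma non_compl_mmqfa: "non (compl_mmqfa M) = non M \<union> {nst M, nst M + 1}"
  using wf by (auto simp: non_def wf_mmqfa_def)

lemma start_state_le: "start_state M \<le> nst M"
  using wf by (simp add: start_state_def wf_mmqfa_def)

lemma relabel_involutive: "relabel M (relabel M j) = j"
  by (simp add: relabel_def)

lemma relabel_less: "j < nst M + 3 \<Longrightarrow> relabel M j < nst M + 3"
  using wf by (simp add: relabel_def wf_mmqfa_def)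

lemma start_vec_relabel: "start_vec M w (relabel M j) = state_after M w j"
proof (cases "init M \<in> non M")
  case True
  then show ?thesis
    by (cases w) (simp_all add: start_vec_def relabel_def start_state_def state_after_Nil)
next
  case False
  have "init M \<noteq> nst M" using wf by (simp add: wf_mmqfa_def)
  moreover have "w \<noteq> [] \<Longrightarrow> state_after M w (init M) = 0"
    using False by (simp add: state_after_eq_0_notin_non)
  moreover have "state_after M w (nst M) = 0"
    using wf by (simp add: state_after_eq_0)
  ultimately show ?thesis
    using False
    by (auto simp: start_vec_def relabel_def start_state_def state_after_Nil basis_vec_def)
qed

lemma lift_state_start_vec_relabel:
  "lift_state M (start_vec M w) (relabel M j) = lift_state M (state_after M w) j"
proof -
  have "relabel M j = nst M + 1 \<longleftrightarrow> j = nst M + 1"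
    using wf by (auto simp: relabel_def wf_mmqfa_def)
  then show ?thesis by (simp add: lift_state_def start_vec_relabel basis_vec_def)
qed

lemma start_vec_eq_0: "nst M + 1 \<le> i \<Longrightarrow> start_vec M w i = 0"
  using start_state_le state_after_eq_0[OF wf, of i w] by (simp add: start_vec_def basis_vec_def)

lemma mat_apply_relabeled_trans:
  "mat_apply (nst M + 3) (relabeled_trans M s) (lift_state M (start_vec M w))
   = lift_state M (apply_U M s (state_after M w))"
proof -
  have "mat_apply (nst M + 3) (relabeled_trans M s) (lift_state M (start_vec M w))
      = mat_apply (nst M + 3) (mat_extend (nst M) (trans M s))
          (\<lambda>j. 7/25 * state_after M w j + 24/25 * basis_vec (nst M + 1) j)"
    unfolding relabeled_trans_def
    by (simp add: mat_apply_permute_columns relabel_less relabel_involutive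
        lift_state_start_vec_relabel) (simp add: lift_state_def)
  also have "\<dots> = (\<lambda>i. mat_apply (nst M) (trans M s) (\<lambda>j. 7/25 * state_after M w j) i
                      + 24/25 * basis_vec (nst M + 1) i)"
    by (rule mat_apply_mat_extend) (auto simp: state_after_eq_0[OF wf] basis_vec_def)
  also have "\<dots> = lift_state M (apply_U M s (state_after M w))"
    by (simp only: mat_apply_scale apply_U_eq_mat_apply lift_state_def)
  finally show ?thesis .
qed

lemma cinner_prep_vec: "cinner (nst M + 3) (prep_vec M) (prep_vec M) = 1"
proof -
  have sq: "cnj (prep_vec M j) * prep_vec M j
      = 9/25 * basis_vec (start_state M) j + 16/25 * basis_vec (nst M + 1) j" for j
    using start_state_le by (auto simp: prep_vec_def basis_vec_def)
  show ?thesis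
    using start_state_le unfolding cinner_def sq sum.distrib sum_basis_vec by simp
qed

lemma acc_uniform_eq_0: "nst M + 1 \<le> i \<Longrightarrow> acc_uniform M i = 0"
  using wf by (auto simp: acc_uniform_def basis_vec_def wf_mmqfa_def)

lemma cnj_acc_uniform: "cnj (acc_uniform M i) = acc_uniform M i"
  by (simp add: acc_uniform_def basis_vec_def)

lemma cinner_acc_uniform: "cinner (nst M + 3) (acc_uniform M) (acc_uniform M) = 1"
proof (cases "acc M = {}")
  case True
  then show ?thesis by (simp add: cinner_basis_vec acc_uniform_def) (simp add: basis_vec_def)
next
  case False
  have fin: "finite (acc M)" and sub: "acc M \<subseteq> {..<nst M + 3}"
    using wf finite_subset by (auto simp: wf_mmqfa_def)
  have "cinner (nst M + 3) (acc_uniform M) (acc_uniform M)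
      = (\<Sum>j<nst M + 3. if j \<in> acc M then of_real (1 / card (acc M)) else 0)"
    unfolding cinner_def using False
    by (intro sum.cong) (auto simp: acc_uniform_def simp flip: of_real_mult)
  also have "\<dots> = (\<Sum>j\<in>acc M. of_real (1 / card (acc M)))"
    using sub by (simp add: sum.If_cases Int_absorb1)
  finally show ?thesis using False fin by simp
qed

lemma cinner_meas_vec: "cinner (nst M + 3) (meas_vec M) (meas_vec M) = 1"
proof -
  have sq: "cnj (meas_vec M j) * meas_vec M j
      = 4/9 * basis_vec (nst M + 1) j + 4/9 * (cnj (acc_uniform M j) * acc_uniform M j)
        + 1/9 * basis_vec (nst M + 2) j" for j
    by (cases "nst M + 1 \<le> j")
      (auto simp: meas_vec_def basis_vec_def acc_uniform_eq_0 cnj_acc_uniform)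
  show ?thesis
    unfolding cinner_def sq sum.distrib sum_basis_vec
    unfolding sum_distrib_left[symmetric] cinner_def[symmetric] cinner_acc_uniform by simp
qed

lemma householder_prep_vec_start:
  "mat_apply (nst M + 3) (householder (prep_vec M)) (lift_state M (start_vec M []))
   = basis_vec (start_state M)"
proof -
  have c: "cinner (nst M + 3) (prep_vec M) (basis_vec (start_state M)) = 3/5"
    using start_state_le by (simp add: cinner_basis_vec) (simp add: prep_vec_def basis_vec_def)
  have start: "mat_apply (nst M + 3) (householder (prep_vec M)) (basis_vec (start_state M))
      = lift_state M (start_vec M [])"
    unfolding fun_eq_iff mat_apply_householder c using start_state_le
    by (auto simp: prep_vec_def basis_vec_def lift_state_def start_vec_def)
  have "\<And>i. nst M + 3 \<le> i \<Longrightarrow> basis_vec (start_state M) i = 0"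
    using start_state_le by (simp add: basis_vec_def)
  from householder_involutive[OF cinner_prep_vec, where x = "basis_vec (start_state M)", OF this]
  show ?thesis
    unfolding start .
qed

lemma apply_U_compl_mmqfa:
  "apply_U (compl_mmqfa M) s
     (mat_apply (nst M + 3) (householder (prep_vec M)) (lift_state M (start_vec M w)))
   = mat_apply (nst M + 3) (householder (if s = None then meas_vec M else prep_vec M))
       (lift_state M (apply_U M s (state_after M w)))"
  using householder_involutive[OF cinner_prep_vec, of "lift_state M (start_vec M w)"]
  by (simp add: apply_U_eq_mat_apply mat_apply_mat_mul mat_apply_relabeled_trans
      lift_state_eq_0 start_vec_eq_0)

lemma state_after_compl_mmqfa:
  "state_after (compl_mmqfa M) w
   = mat_apply (nst M + 3) (householder (prep_vec M)) (lift_state M (start_vec M w))"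
proof (induction w rule: rev_induct)
  case Nil
  show ?case by (simp add: state_after_Nil householder_prep_vec_start)
next
  case (snoc \<sigma> w)
  have prep_vec_supp: "prep_vec M i = 0" if "i \<notin> non (compl_mmqfa M)" for i
    using that start_state_le
    by (auto simp: prep_vec_def basis_vec_def non_compl_mmqfa start_state_def)
  let ?\<psi> = "lift_state M (apply_U M (Some \<sigma>) (state_after M w))"
  have restrict: "(\<lambda>i. if i \<in> non (compl_mmqfa M) then ?\<psi> i else 0)
      = lift_state M (start_vec M (w @ [\<sigma>]))"
  proof
    fix i
    show "(if i \<in> non (compl_mmqfa M) then ?\<psi> i else 0)
        = lift_state M (start_vec M (w @ [\<sigma>])) i"
      using non_less[of i M]
      by (cases "i \<in> non M") (auto simp: lift_state_def start_vec_def state_after_snoc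
          non_compl_mmqfa basis_vec_def apply_U_eq_0)
  qed
  have "state_after (compl_mmqfa M) (w @ [\<sigma>])
      = (\<lambda>i. if i \<in> non (compl_mmqfa M)
              then mat_apply (nst M + 3) (householder (prep_vec M)) ?\<psi> i else 0)"
    unfolding state_after_snoc snoc apply_U_compl_mmqfa by simp
  also have "\<dots> = mat_apply (nst M + 3) (householder (prep_vec M))
                      (\<lambda>i. if i \<in> non (compl_mmqfa M) then ?\<psi> i else 0)"
    by (rule householder_commutes_with_restriction) (rule prep_vec_supp)
  also have "\<dots> = mat_apply (nst M + 3) (householder (prep_vec M))
                      (lift_state M (start_vec M (w @ [\<sigma>])))"
    using restrict by (rule arg_cong)
  finally show ?case .
qed

lemma end_decisive_compl_mmqfa: "end_decisive (compl_mmqfa M)"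
  unfolding end_decisive_def
proof (intro allI ballI)
  fix w \<sigma> i assume "i \<in> acc (compl_mmqfa M)"
  then have i: "i = nst M + 2" by simp
  show "apply_U (compl_mmqfa M) (Some \<sigma>) (state_after (compl_mmqfa M) w) i = 0"
    unfolding state_after_compl_mmqfa apply_U_compl_mmqfa i
    using start_state_le
    by (simp add: mat_apply_householder lift_state_def prep_vec_def basis_vec_def apply_U_eq_0)
qed

lemma acc_prob_compl_mmqfa:
  "acc_prob (compl_mmqfa M) x = (cmod (2/3 * (16/25 - 14/75
      * cinner (nst M + 3) (acc_uniform M) (apply_U M None (state_after M x)))))\<^sup>2"
proof -
  let ?a = "apply_U M None (state_after M x)"
  have sq: "cnj (meas_vec M j) * lift_state M ?a j
      = 16/25 * basis_vec (nst M + 1) j - 14/75 * (cnj (acc_uniform M j) * ?a j)" for j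
    by (cases "nst M + 1 \<le> j")
      (auto simp: meas_vec_def lift_state_def basis_vec_def acc_uniform_eq_0 cnj_acc_uniform
        apply_U_eq_0)
  have "cinner (nst M + 3) (meas_vec M) (lift_state M ?a)
      = 16/25 - 14/75 * cinner (nst M + 3) (acc_uniform M) ?a"
    unfolding cinner_def sq sum_subtractf sum_basis_vec
    unfolding sum_distrib_left[symmetric] cinner_def[symmetric] by simp
  then have "apply_U (compl_mmqfa M) None (state_after (compl_mmqfa M) x) (nst M + 2)
      = - (2/3 * (16/25 - 14/75 * cinner (nst M + 3) (acc_uniform M) ?a))"
    unfolding state_after_compl_mmqfa apply_U_compl_mmqfa
    by (simp add: mat_apply_householder lift_state_def meas_vec_def basis_vec_def
        acc_uniform_eq_0 apply_U_eq_0)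
  then show ?thesis
    by (simp add: acc_prob_end_decisive[OF end_decisive_compl_mmqfa])
qed

lemma wf_compl_mmqfa: "wf_mmqfa (compl_mmqfa M)"
  unfolding wf_mmqfa_def
proof (intro conjI allI)
  have inj: "inj_on (relabel M) {..<nst M + 3}"
    by (rule inj_on_inverseI[where g = "relabel M"]) (rule relabel_involutive)
  have "unitary_on (nst M) (trans M s)" for s
    using wf by (simp add: wf_mmqfa_def)
  then have "unitary_on (nst M + 3) (relabeled_trans M s)" for s
    unfolding relabeled_trans_def
    by (rule unitary_on_permute_columns[OF unitary_on_mat_extend[OF _ le_add1] relabel_less inj])
  then show "unitary_on (nst (compl_mmqfa M)) (trans (compl_mmqfa M) s)" for s
    by (simp add: unitary_on_mat_mul unitary_on_householder cinner_prep_vec cinner_meas_vec)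
  have "acc M \<subseteq> {..<nst M}" and "rej M \<subseteq> {..<nst M}"
    using wf by (simp_all add: wf_mmqfa_def)
  then show "init (compl_mmqfa M) < nst (compl_mmqfa M)"
    and "acc (compl_mmqfa M) \<subseteq> {..<nst (compl_mmqfa M)}"
    and "rej (compl_mmqfa M) \<subseteq> {..<nst (compl_mmqfa M)}"
    and "acc (compl_mmqfa M) \<inter> rej (compl_mmqfa M) = {}"
    using start_state_le by auto
qed

end

section \<open>The accepting amplitude\<close>

lemma sum_squares_le_square_sum:
  fixes f :: "'b \<Rightarrow> real"
  assumes "\<And>j. j \<in> A \<Longrightarrow> 0 \<le> f j"
  shows "(\<Sum>j\<in>A. (f j)\<^sup>2) \<le> (\<Sum>j\<in>A. f j)\<^sup>2"
  using assms
proof (induction A rule: infinite_finite_induct)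
  case (insert a A)
  have "0 \<le> f a * (\<Sum>j\<in>A. f j)"
    using insert.prems by (simp add: sum_nonneg)
  then show ?case
    using insert by (simp add: power2_sum)
qed simp_all

lemma square_sum_le_card_mult_sum_squares:
  fixes f :: "'b \<Rightarrow> real"
  shows "(\<Sum>j\<in>A. f j)\<^sup>2 \<le> card A * (\<Sum>j\<in>A. (f j)\<^sup>2)"
proof -
  have "0 \<le> (\<Sum>i\<in>A. \<Sum>j\<in>A. (f i - f j)\<^sup>2)"
    by (simp add: sum_nonneg)
  also have "\<dots> = 2 * (card A * (\<Sum>j\<in>A. (f j)\<^sup>2)) - 2 * (\<Sum>j\<in>A. f j)\<^sup>2"
    by (simp add: power2_diff sum.distrib sum_subtractf sum_distrib_left sum_distrib_right
        power2_eq_square algebra_simps)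
  finally show ?thesis by simp
qed

text \<open>If acc M is empty, this is 0/0 = 0.\<close>

definition acc_amplitude :: "'a mmqfa \<Rightarrow> 'a list \<Rightarrow> real" where
  "acc_amplitude M x
     = (\<Sum>j\<in>acc M. Re (apply_U M None (state_after M x) j)) / sqrt (card (acc M))"

definition compl_acc_prob :: "real \<Rightarrow> real" where
  "compl_acc_prob s = (2/3 * (16/25 - 14/75 * s))\<^sup>2"

lemma compl_acc_prob_strict_antimono:
  assumes "0 \<le> a" and "a < b" and "b \<le> 1"
  shows "compl_acc_prob b < compl_acc_prob a"
  unfolding compl_acc_prob_def using assms by (intro power_strict_mono) auto

context
  fixes M :: "'a mmqfa"
  assumes wf: "wf_mmqfa M" and pos: "positive_amplitude M"
begin

lemma end_amplitude_real:
  "j \<in> acc M \<Longrightarrow>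
   apply_U M None (state_after M x) j = of_real (Re (apply_U M None (state_after M x) j))"
  using pos by (simp add: positive_amplitude_def complex_eq_iff)

lemma end_amplitude_nonneg: "j \<in> acc M \<Longrightarrow> 0 \<le> Re (apply_U M None (state_after M x) j)"
  using pos by (simp add: positive_amplitude_def)

lemma cinner_acc_uniform_end_amplitude:
  "cinner (nst M + 3) (acc_uniform M) (apply_U M None (state_after M x))
   = of_real (acc_amplitude M x)"
proof (cases "acc M = {}")
  case True
  then show ?thesis
    by (simp add: acc_uniform_def cinner_basis_vec_left acc_amplitude_def apply_U_eq_0)
next
  case False
  let ?a = "apply_U M None (state_after M x)"
  have sub: "acc M \<subseteq> {..<nst M + 3}"
    using wf by (auto simp: wf_mmqfa_def)
  have "cinner (nst M + 3) (acc_uniform M) ?a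
      = (\<Sum>j<nst M + 3. if j \<in> acc M then of_real (1 / sqrt (card (acc M))) * ?a j else 0)"
    unfolding cinner_def using False by (intro sum.cong) (auto simp: acc_uniform_def)
  also have "\<dots> = (\<Sum>j\<in>acc M. of_real (1 / sqrt (card (acc M))) * ?a j)"
    using sub by (simp add: sum.If_cases Int_absorb1)
  also have "\<dots> = (\<Sum>j\<in>acc M. of_real (Re (?a j) / sqrt (card (acc M))))"
    by (intro sum.cong refl) (subst end_amplitude_real, simp_all)
  also have "\<dots> = of_real (acc_amplitude M x)"
    by (simp add: acc_amplitude_def sum_divide_distrib)
  finally show ?thesis .
qed

lemma acc_prob_compl_mmqfa_eq: "acc_prob (compl_mmqfa M) x = compl_acc_prob (acc_amplitude M x)"
proof -
  have "2/3 * (16/25 - 14/75 * complex_of_real (acc_amplitude M x))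
      = complex_of_real (2/3 * (16/25 - 14/75 * acc_amplitude M x))"
    by simp
  then show ?thesis
    unfolding acc_prob_compl_mmqfa[OF wf] cinner_acc_uniform_end_amplitude compl_acc_prob_def
    by (simp only: norm_of_real power2_abs)
qed

context
  assumes ed: "end_decisive M"
begin

lemma acc_prob_eq_sum_Re_sq:
  "acc_prob M x = (\<Sum>j\<in>acc M. (Re (apply_U M None (state_after M x) j))\<^sup>2)"
  unfolding acc_prob_end_decisive[OF ed]
  by (intro sum.cong refl) (subst end_amplitude_real, simp_all)

lemma acc_amplitude_sq_le: "(acc_amplitude M x)\<^sup>2 \<le> acc_prob M x"
proof -
  let ?S = "\<Sum>j\<in>acc M. Re (apply_U M None (state_after M x) j)"
  have "(acc_amplitude M x)\<^sup>2 = ?S\<^sup>2 / card (acc M)"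
    by (simp add: acc_amplitude_def power_divide)
  also have "\<dots> \<le> acc_prob M x"
    using square_sum_le_card_mult_sum_squares[of _ "acc M"]
    by (cases "card (acc M) = 0")
      (simp_all add: acc_prob_eq_sum_Re_sq sum_nonneg divide_le_eq mult.commute)
  finally show ?thesis .
qed

lemma acc_amplitude_le_1: "acc_amplitude M x \<le> 1"
proof (rule power2_le_imp_le)
  show "(acc_amplitude M x)\<^sup>2 \<le> 1\<^sup>2"
    using acc_amplitude_sq_le[of x] acc_prob_le_1[OF wf ed, of x] by simp
qed simp

lemma acc_amplitude_eq_0: "acc_prob M x = 0 \<Longrightarrow> acc_amplitude M x = 0"
  using acc_amplitude_sq_le[of x] by simp

lemma acc_amplitude_gt:
  assumes "0 \<le> c" and "c < acc_prob M x"
  shows "sqrt (c / nst M) < acc_amplitude M x"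
proof -
  let ?S = "\<Sum>j\<in>acc M. Re (apply_U M None (state_after M x) j)"
  have "acc_prob M x \<le> ?S\<^sup>2"
    unfolding acc_prob_eq_sum_Re_sq by (rule sum_squares_le_square_sum) (rule end_amplitude_nonneg)
  moreover have "0 \<le> ?S" by (simp add: sum_nonneg end_amplitude_nonneg)
  ultimately have S: "sqrt c < ?S"
    using assms real_sqrt_less_mono[of c "?S\<^sup>2"] by simp
  then have "acc M \<noteq> {}" using assms(1) by auto
  moreover have "acc M \<subseteq> {..<nst M}" using wf by (simp add: wf_mmqfa_def)
  ultimately have k: "0 < card (acc M)" "card (acc M) \<le> nst M"
    by (auto simp: card_gt_0_iff finite_subset dest: card_mono[rotated])
  have "sqrt (c / nst M) \<le> sqrt (c / card (acc M))"
    using k assms(1) by (intro real_sqrt_le_mono divide_left_mono) auto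
  also have "\<dots> = sqrt c / sqrt (card (acc M))"
    by (simp add: real_sqrt_divide)
  also have "\<dots> < acc_amplitude M x"
    using S k by (simp add: acc_amplitude_def divide_strict_right_mono)
  finally show ?thesis .
qed

lemma acc_amplitude_gap:
  assumes "accepts_pos_one_sided M L"
  obtains m where "0 < m" and "m \<le> 1"
    and "\<And>x. x \<in> L \<Longrightarrow> m < acc_amplitude M x"
    and "\<And>x. x \<notin> L \<Longrightarrow> acc_amplitude M x = 0"
proof -
  obtain c where c: "c > 0" and in_L: "\<And>x. x \<in> L \<Longrightarrow> acc_prob M x > c"
    and notin_L: "\<And>x. x \<notin> L \<Longrightarrow> acc_prob M x = 0"
    using assms unfolding accepts_pos_one_sided_def by blast
  have "0 < nst M" using wf by (auto simp: wf_mmqfa_def)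
  show thesis
  proof (rule that[of "min 1 (sqrt (c / nst M))"])
    show "0 < min 1 (sqrt (c / nst M))" using c \<open>0 < nst M\<close> by simp
    show "min 1 (sqrt (c / nst M)) \<le> 1" by simp
    show "min 1 (sqrt (c / nst M)) < acc_amplitude M x" if "x \<in> L" for x
      using acc_amplitude_gt[of c x] that c in_L by simp
    show "acc_amplitude M x = 0" if "x \<notin> L" for x
      using that notin_L acc_amplitude_eq_0 by simp
  qed
qed

end

end

theorem lemma4p13:
  fixes M :: "'a::finite mmqfa" and L :: "'a list set"
  assumes "wf_mmqfa M" and "end_decisive M" and "positive_amplitude M"
    and "accepts_pos_one_sided M L"
  shows "\<exists>M' :: 'a mmqfa. wf_mmqfa M' \<and> end_decisive M' \<and> accepts_bounded M' (UNIV - L)"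
proof -
  note wf = assms(1) and ed = assms(2) and pos = assms(3)
  obtain m where m: "0 < m" "m \<le> 1"
    and in_L: "\<And>x. x \<in> L \<Longrightarrow> m < acc_amplitude M x"
    and notin_L: "\<And>x. x \<notin> L \<Longrightarrow> acc_amplitude M x = 0"
    using acc_amplitude_gap[OF wf pos ed assms(4)] by blast
  have "accepts_bounded (compl_mmqfa M) (UNIV - L)"
  proof (rule accepts_bounded_if_gap)
    show "acc_prob (compl_mmqfa M) x = compl_acc_prob 0" if "x \<in> UNIV - L" for x
      using that notin_L by (simp add: acc_prob_compl_mmqfa_eq[OF wf pos])
    show "acc_prob (compl_mmqfa M) x \<le> compl_acc_prob m" if "x \<notin> UNIV - L" for x
      using that m in_L[of x] acc_amplitude_le_1[OF wf pos ed, of x]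
      by (simp add: acc_prob_compl_mmqfa_eq[OF wf pos] compl_acc_prob_strict_antimono less_imp_le)
    show "compl_acc_prob m < compl_acc_prob 0"
      using m by (simp add: compl_acc_prob_strict_antimono)
  qed
  then show ?thesis
    using wf_compl_mmqfa[OF wf] end_decisive_compl_mmqfa[OF wf] by blast
qed

end
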